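(* Let $A_0\in\mathbb{R}^{n\times n}$. There exists a symmetric matrix $P_0\succeq 0$ such that $$A_0^\top P_0+P_0A_0\preceq 0\quad\text{and}\quad \ker P_0\subseteq \ker A_0$$ if and only if all eigenvalues of $A_0$ have non-positive real part, every Jordan block of $A_0$ associated with the eigenvalue $0$ has dimension at most $2$, and every Jordan block associated with a nonzero eigenvalue on the imaginary axis has dimension $1$.
   Context: $\succeq 0$ ($\preceq 0$) denotes positive (negative) semi-definiteness of a symmetric matrix. *)

theory Defs
  imports "Jordan_Normal_Form.Jordan_Normal_Form_Existence" "Jordan_Normal_Form.Matrix_Kernel"
begin

definition sym_mat :: "real mat \<Rightarrow> bool" where
  "sym_mat P \<longleftrightarrow> transpose_mat P = P"

definition psd_mat :: "nat \<Rightarrow> real mat \<Rightarrow> bool" where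
  "psd_mat n P \<longleftrightarrow> P \<in> carrier_mat n n \<and> sym_mat P \<and>
     (\<forall>v \<in> carrier_vec n. v \<bullet> (P *\<^sub>v v) \<ge> 0)"

definition nsd_mat :: "nat \<Rightarrow> real mat \<Rightarrow> bool" where
  "nsd_mat n P \<longleftrightarrow> P \<in> carrier_mat n n \<and> sym_mat P \<and>
     (\<forall>v \<in> carrier_vec n. v \<bullet> (P *\<^sub>v v) \<le> 0)"

end

theory Submission
  imports Defs
begin

text \<open>
  Necessity. Complexify \<open>A\<close>, \<open>P\<close> and \<open>Q = A\<^sup>T P + P A\<close>. For an eigenvector \<open>x\<close> of \<open>A\<close> with
  eigenvalue \<open>z\<close> we get \<open>x\<^sup>H Q x = 2 Re z \<cdot> x\<^sup>H P x\<close>; if \<open>Re z > 0\<close> this forces \<open>P x = 0\<close>,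
  hence \<open>A x = 0\<close> by the kernel inclusion, so \<open>z = 0\<close>. If \<open>Re z = 0\<close> and
  \<open>A v = z v + u\<close>, \<open>A w = z w + v\<close> with \<open>P u = 0\<close>, then \<open>v\<^sup>H Q v = 0\<close>, so \<open>Q v = 0\<close> by
  semidefiniteness, and \<open>0 = w\<^sup>H Q v = v\<^sup>H P v\<close> gives \<open>P v = 0\<close> and \<open>A v = 0\<close>. Along a Jordan
  chain this excludes blocks of size 2 at a nonzero imaginary eigenvalue and of size 3 at 0.

  Sufficiency. Write \<open>R A = J R\<close> with \<open>J\<close> in Jordan form and take \<open>P = Re (R\<^sup>H D R)\<close> for
  a suitable nonnegative diagonal \<open>D\<close>; then \<open>x\<^sup>T Q x = 2 \<Sum>\<^sub>k D\<^sub>k Re (conj y\<^sub>k (J y)\<^sub>k)\<close>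
  with \<open>y = R x\<close>, and the weights can be chosen to make this nonpositive while keeping
  \<open>ker P \<subseteq> ker A\<close>.
\<close>

section \<open>Entries of Jordan matrices\<close>

lemma jordan_matrix_Cons_index:
  assumes "i < k + sum_list (map fst n_as)" "j < k + sum_list (map fst n_as)"
  shows "jordan_matrix ((k, a) # n_as) $$ (i, j) =
    (if i < k \<and> j < k then (if i = j then a else if Suc i = j then 1 else 0)
     else if k \<le> i \<and> k \<le> j then jordan_matrix n_as $$ (i - k, j - k) else 0)"
  using assms unfolding jordan_matrix_Cons by (subst index_mat_four_block) auto

lemma jordan_matrix_bidiagonal:
  assumes "i < sum_list (map fst n_as)" "j < sum_list (map fst n_as)" "j \<noteq> i" "j \<noteq> Suc i"
  shows "jordan_matrix n_as $$ (i, j) = 0"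
  using assms
proof (induction n_as arbitrary: i j)
  case (Cons ka n_as)
  obtain k a where [simp]: "ka = (k, a)" by force
  show ?case
  proof (cases "k \<le> i \<and> k \<le> j")
    case True
    then show ?thesis
      using Cons.prems Cons.IH[of "i - k" "j - k"] by (auto simp: jordan_matrix_Cons_index)
  qed (use Cons.prems in \<open>auto simp: jordan_matrix_Cons_index\<close>)
qed simp

lemma jordan_matrix_superdiagonal_0_or_1:
  assumes "Suc i < sum_list (map fst n_as)"
  shows "jordan_matrix n_as $$ (i, Suc i) \<in> {0, 1}"
  using assms
proof (induction n_as arbitrary: i)
  case (Cons ka n_as)
  obtain k a where [simp]: "ka = (k, a)" by force
  show ?case
  proof (cases "k \<le> i")
    case True
    then show ?thesis
      using Cons.prems Cons.IH[of "i - k"] by (auto simp: jordan_matrix_Cons_index Suc_diff_le)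
  qed (use Cons.prems in \<open>auto simp: jordan_matrix_Cons_index\<close>)
qed simp

lemma jordan_matrix_superdiagonal_same_eigenvalue:
  assumes "Suc i < sum_list (map fst n_as)" "jordan_matrix n_as $$ (i, Suc i) \<noteq> 0"
  shows "jordan_matrix n_as $$ (Suc i, Suc i) = jordan_matrix n_as $$ (i, i)"
  using assms
proof (induction n_as arbitrary: i)
  case (Cons ka n_as)
  obtain k a where [simp]: "ka = (k, a)" by force
  show ?case
  proof (cases "k \<le> i")
    case True
    then show ?thesis
      using Cons.prems Cons.IH[of "i - k"] by (auto simp: jordan_matrix_Cons_index Suc_diff_le)
  qed (use Cons.prems in \<open>auto simp: jordan_matrix_Cons_index\<close>)
qed simp

lemma jordan_matrix_superdiagonal_run:
  assumes "i + m < sum_list (map fst n_as)"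
    and "\<And>j. j < m \<Longrightarrow> jordan_matrix n_as $$ (i + j, Suc (i + j)) \<noteq> 0"
  shows "\<exists>k > m. (k, jordan_matrix n_as $$ (i, i)) \<in> set n_as"
  using assms
proof (induction n_as arbitrary: i)
  case (Cons ka n_as)
  obtain k a where [simp]: "ka = (k, a)" by force
  show ?case
  proof (cases "k \<le> i")
    case True
    have "\<exists>k' > m. (k', jordan_matrix n_as $$ (i - k, i - k)) \<in> set n_as"
    proof (rule Cons.IH)
      show "i - k + m < sum_list (map fst n_as)" using Cons.prems(1) True by simp
      fix j assume "j < m"
      then show "jordan_matrix n_as $$ (i - k + j, Suc (i - k + j)) \<noteq> 0"
        using Cons.prems(2)[OF \<open>j < m\<close>] Cons.prems(1) True
        by (auto simp: jordan_matrix_Cons_index Suc_diff_le)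
    qed
    then show ?thesis using Cons.prems(1) True by (auto simp: jordan_matrix_Cons_index)
  next
    case False
    have "i + m < k"
    proof (rule ccontr)
      assume "\<not> i + m < k"
      then have j: "k - Suc i < m" using False by auto
      have "jordan_matrix ((k, a) # n_as) $$ (i + (k - Suc i), Suc (i + (k - Suc i))) = 0"
        using j Cons.prems(1) False by (auto simp: jordan_matrix_Cons_index)
      then show False using Cons.prems(2)[OF j] by simp
    qed
    then show ?thesis using Cons.prems(1) False by (auto simp: jordan_matrix_Cons_index intro!: exI[of _ k])
  qed
qed simp

lemma jordan_matrix_block_position:
  assumes "(k, z) \<in> set n_as" "0 < k"
  shows "\<exists>i. i + k \<le> sum_list (map fst n_as)
    \<and> (\<forall>j < k. jordan_matrix n_as $$ (i + j, i + j) = z)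
    \<and> (\<forall>j. Suc j < k \<longrightarrow> jordan_matrix n_as $$ (i + j, Suc (i + j)) = 1)
    \<and> (i = 0 \<or> jordan_matrix n_as $$ (i - 1, i) = 0)"
  using assms
proof (induction n_as)
  case (Cons ka n_as)
  obtain k' a where [simp]: "ka = (k', a)" by force
  show ?case
  proof (cases "(k, z) = (k', a)")
    case True
    then show ?thesis by (intro exI[of _ 0]) (auto simp: jordan_matrix_Cons_index)
  next
    case False
    with Cons obtain i where i: "i + k \<le> sum_list (map fst n_as)"
      "\<forall>j < k. jordan_matrix n_as $$ (i + j, i + j) = z"
      "\<forall>j. Suc j < k \<longrightarrow> jordan_matrix n_as $$ (i + j, Suc (i + j)) = 1"
      "i = 0 \<or> jordan_matrix n_as $$ (i - 1, i) = 0" by auto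
    have "k' + i = 0 \<or> jordan_matrix ((k', a) # n_as) $$ (k' + i - 1, k' + i) = 0"
      using i Cons.prems(2) by (cases "i = 0") (auto simp: jordan_matrix_Cons_index)
    with i show ?thesis
      by (intro exI[of _ "k' + i"]) (auto simp: jordan_matrix_Cons_index)
  qed
qed simp

lemma col_mult_jordan_matrix:
  fixes S :: "'a :: comm_semiring_1 mat"
  assumes S: "S \<in> carrier_mat n (sum_list (map fst n_as))" and c: "c < sum_list (map fst n_as)"
  shows "col (S * jordan_matrix n_as) c = jordan_matrix n_as $$ (c, c) \<cdot>\<^sub>v col S c +
    (if c = 0 then 0\<^sub>v n else jordan_matrix n_as $$ (c - 1, c) \<cdot>\<^sub>v col S (c - 1))"
proof (rule eq_vecI)
  let ?N = "sum_list (map fst n_as)" and ?J = "jordan_matrix n_as"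
  fix r assume "r < dim_vec (?J $$ (c, c) \<cdot>\<^sub>v col S c +
    (if c = 0 then 0\<^sub>v n else ?J $$ (c - 1, c) \<cdot>\<^sub>v col S (c - 1)))"
  then have r: "r < n" using S by (auto split: if_splits)
  have "col (S * ?J) c $ r = (\<Sum>k = 0..<?N. S $$ (r, k) * ?J $$ (k, c))"
    using S c r by (simp add: scalar_prod_def)
  also have "\<dots> = (\<Sum>k = 0..<?N. (if k = c then S $$ (r, c) * ?J $$ (c, c) else 0)
      + (if Suc k = c then S $$ (r, k) * ?J $$ (k, c) else 0))"
    by (intro sum.cong refl) (use jordan_matrix_bidiagonal[OF _ c] in auto)
  also have "\<dots> = S $$ (r, c) * ?J $$ (c, c) + (if c = 0 then 0 else S $$ (r, c - 1) * ?J $$ (c - 1, c))"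
    using c by (cases c) (auto simp: sum.distrib)
  finally show "col (S * ?J) c $ r = (?J $$ (c, c) \<cdot>\<^sub>v col S c +
    (if c = 0 then 0\<^sub>v n else ?J $$ (c - 1, c) \<cdot>\<^sub>v col S (c - 1))) $ r"
    using carrier_matD[OF S] r c by (cases c) (auto simp: ac_simps)
qed (use S c in auto)

lemma jordan_matrix_mult_vec_index:
  assumes y: "y \<in> carrier_vec (sum_list (map fst n_as))" and k: "k < sum_list (map fst n_as)"
  shows "(jordan_matrix n_as *\<^sub>v y) $ k = jordan_matrix n_as $$ (k, k) * y $ k +
    (if Suc k < sum_list (map fst n_as) then jordan_matrix n_as $$ (k, Suc k) * y $ Suc k else 0)"
proof -
  let ?N = "sum_list (map fst n_as)" and ?J = "jordan_matrix n_as"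
  have "(?J *\<^sub>v y) $ k = (\<Sum>j = 0..<?N. ?J $$ (k, j) * y $ j)"
    using y k by (simp add: scalar_prod_def)
  also have "\<dots> = (\<Sum>j = 0..<?N. (if j = k then ?J $$ (k, k) * y $ k else 0)
      + (if j = Suc k then ?J $$ (k, j) * y $ j else 0))"
    by (intro sum.cong refl) (use jordan_matrix_bidiagonal[OF k] in auto)
  also have "\<dots> = ?J $$ (k, k) * y $ k +
      (if Suc k < ?N then ?J $$ (k, Suc k) * y $ Suc k else 0)"
    using k by (simp add: sum.distrib)
  finally show ?thesis .
qed

section \<open>Jordan chains\<close>

lemma col_neq_zero_if_left_invertible:
  fixes S :: "'a :: semiring_1 mat"
  assumes "S \<in> carrier_mat n n" "S' \<in> carrier_mat n n" "S' * S = 1\<^sub>m n" "c < n"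
  shows "col S c \<noteq> 0\<^sub>v n"
proof
  assume "col S c = 0\<^sub>v n"
  have "(S' * S) $$ (c, c) = row S' c \<bullet> col S c" using assms by (intro index_mult_mat) auto
  also have "\<dots> = 0" using \<open>col S c = 0\<^sub>v n\<close> assms by simp
  finally show False using assms by simp
qed

lemma similar_mat_wit_intertwines:
  assumes "similar_mat_wit A B P Q"
  shows "A * P = P * B"
proof -
  obtain n where B: "B \<in> carrier_mat n n" and P: "P \<in> carrier_mat n n"
    and Q: "Q \<in> carrier_mat n n" and QP: "Q * P = 1\<^sub>m n" and A: "A = P * B * Q"
    using similar_mat_witD[OF refl assms] by blast
  have PB: "P * B \<in> carrier_mat n n" using P B by simp
  have "A * P = P * B * (Q * P)" unfolding A using assoc_mult_mat[OF PB Q P] .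
  then show ?thesis using right_mult_one_mat[OF PB] by (simp add: QP)
qed

lemma jordan_nf_chain:
  fixes A :: "'a :: field mat"
  assumes A: "A \<in> carrier_mat n n" and jnf: "jordan_nf A n_as" and block: "(k, z) \<in> set n_as"
  obtains x where "\<And>j. x j \<in> carrier_vec n" "x 0 \<noteq> 0\<^sub>v n" "A *\<^sub>v x 0 = z \<cdot>\<^sub>v x 0"
    "\<And>j. Suc j < k \<Longrightarrow> A *\<^sub>v x (Suc j) = z \<cdot>\<^sub>v x (Suc j) + x j"
proof -
  let ?J = "jordan_matrix n_as"
  from jnf obtain S S' where wit: "similar_mat_wit A ?J S S'"
    unfolding jordan_nf_def similar_mat_def by blast
  from similar_mat_witD2[OF A wit] have J: "?J \<in> carrier_mat n n" and S: "S \<in> carrier_mat n n"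
    and S': "S' \<in> carrier_mat n n" and S'S: "S' * S = 1\<^sub>m n" by auto
  have N: "sum_list (map fst n_as) = n" using J by auto
  have AS: "A * S = S * ?J" using similar_mat_wit_intertwines[OF wit] .
  have "0 < k" using jnf block unfolding jordan_nf_def by force
  from jordan_matrix_block_position[OF block this] obtain i where i: "i + k \<le> n"
    "\<And>j. j < k \<Longrightarrow> ?J $$ (i + j, i + j) = z"
    "\<And>j. Suc j < k \<Longrightarrow> ?J $$ (i + j, Suc (i + j)) = 1"
    "i = 0 \<or> ?J $$ (i - 1, i) = 0" unfolding N by blast
  have A_col: "A *\<^sub>v col S c = ?J $$ (c, c) \<cdot>\<^sub>v col S c +
    (if c = 0 then 0\<^sub>v n else ?J $$ (c - 1, c) \<cdot>\<^sub>v col S (c - 1))" if "c < n" for c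
  proof -
    have "A *\<^sub>v col S c = col (S * ?J) c" using col_mult2[OF A S that] by (simp only: AS)
    then show ?thesis using col_mult_jordan_matrix[of S n n_as c] S that unfolding N by simp
  qed
  show thesis
  proof (rule that[of "\<lambda>j. col S (i + j)"])
    show "col S (i + 0) \<noteq> 0\<^sub>v n"
      using col_neq_zero_if_left_invertible[OF S S' S'S] i(1) \<open>0 < k\<close> by simp
    have "0 \<cdot>\<^sub>v col S (i - 1) = 0\<^sub>v n" using S by (intro eq_vecI) auto
    then show "A *\<^sub>v col S (i + 0) = z \<cdot>\<^sub>v col S (i + 0)"
      using A_col[of i] i(1,4) i(2)[of 0] \<open>0 < k\<close> S by auto
    fix j assume "Suc j < k"
    then show "A *\<^sub>v col S (i + Suc j) = z \<cdot>\<^sub>v col S (i + Suc j) + col S (i + j)"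
      using A_col[of "i + Suc j"] i(1,3) i(2)[of "Suc j"] S by auto
  qed (use S in auto)
qed

lemma jordan_nf_block_eigenvalue:
  fixes A :: "'a :: field mat"
  assumes A: "A \<in> carrier_mat n n" and "jordan_nf A n_as" "(k, z) \<in> set n_as"
  shows "eigenvalue A z"
proof -
  obtain x where "\<And>j. x j \<in> carrier_vec n" "x 0 \<noteq> 0\<^sub>v n" "A *\<^sub>v x 0 = z \<cdot>\<^sub>v x 0"
    "\<And>j. Suc j < k \<Longrightarrow> A *\<^sub>v x (Suc j) = z \<cdot>\<^sub>v x (Suc j) + x j"
    by (rule jordan_nf_chain[OF assms]) blast
  then show ?thesis using A by (auto simp: eigenvalue_def eigenvector_def)
qed

section \<open>Real quadratic forms\<close>

lemma sym_mat_scalar_prod_swap: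
  assumes "M \<in> carrier_mat n n" "sym_mat M" "u \<in> carrier_vec n" "w \<in> carrier_vec n"
  shows "u \<bullet> (M *\<^sub>v w) = w \<bullet> (M *\<^sub>v u)"
proof -
  have "u \<bullet> (M *\<^sub>v w) = (transpose_mat M *\<^sub>v u) \<bullet> w"
    using assms by (simp add: transpose_vec_mult_scalar)
  also have "\<dots> = w \<bullet> (M *\<^sub>v u)"
    using assms by (simp add: sym_mat_def comm_scalar_prod[of _ n])
  finally show ?thesis .
qed

lemma scalar_prod_lyapunov:
  fixes A P :: "'a :: comm_ring mat"
  assumes "A \<in> carrier_mat n n" "P \<in> carrier_mat n n" "x \<in> carrier_vec n" "y \<in> carrier_vec n"
  shows "x \<bullet> ((transpose_mat A * P + P * A) *\<^sub>v y) = (A *\<^sub>v x) \<bullet> (P *\<^sub>v y) + x \<bullet> (P *\<^sub>v (A *\<^sub>v y))"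
proof -
  have "x \<bullet> (transpose_mat A *\<^sub>v (P *\<^sub>v y)) = (A *\<^sub>v x) \<bullet> (P *\<^sub>v y)"
    using assms transpose_vec_mult_scalar[of A n n x "P *\<^sub>v y"]
    by (simp add: comm_scalar_prod[of _ n])
  then show ?thesis
    using assms by (simp add: add_mult_distrib_mat_vec[of _ n n] scalar_prod_add_distrib[of _ n])
qed

lemma sym_mat_lyapunov:
  assumes A: "A \<in> carrier_mat n n" and P: "P \<in> carrier_mat n n" "sym_mat P"
  shows "sym_mat (transpose_mat A * P + P * A)"
proof -
  have "transpose_mat (transpose_mat A * P + P * A) = transpose_mat (transpose_mat A * P) + transpose_mat (P * A)"
    using A P by (intro transpose_add) auto
  also have "\<dots> = P * A + transpose_mat A * P"
    using A P by (simp add: transpose_mult[of _ n n _ n] sym_mat_def)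
  also have "\<dots> = transpose_mat A * P + P * A"
    using A P by (intro comm_add_mat[of _ n n]) auto
  finally show ?thesis unfolding sym_mat_def .
qed

lemma quadratic_nonneg_imp_linear_coeff_zero:
  fixes a b :: real
  assumes "\<And>t. 0 \<le> a * t + b * t\<^sup>2"
  shows "a = 0"
proof (rule ccontr)
  assume "a \<noteq> 0"
  define c where "c = \<bar>b\<bar> + 1"
  have c: "c > 0" "b < c" unfolding c_def by auto
  have "c\<^sup>2 * (a * (- a / c) + b * (- a / c)\<^sup>2) = a\<^sup>2 * (b - c)"
    using c by (simp add: field_simps power2_eq_square)
  also have "\<dots> < 0" using \<open>a \<noteq> 0\<close> c by (simp add: mult_pos_neg)
  finally show False using assms[of "- a / c"] c
    by (smt (verit) mult_nonneg_nonneg zero_le_power2)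
qed

lemma psd_mat_quadratic_form_eq_0:
  assumes psd: "psd_mat n P" and v: "v \<in> carrier_vec n" and zero: "v \<bullet> (P *\<^sub>v v) = 0"
  shows "P *\<^sub>v v = 0\<^sub>v n"
proof -
  have P: "P \<in> carrier_mat n n" "sym_mat P" using psd by (auto simp: psd_mat_def)
  define w where "w = P *\<^sub>v v"
  have w: "w \<in> carrier_vec n" using P v by (simp add: w_def)
  have "0 \<le> 2 * (w \<bullet> w) * t + (w \<bullet> (P *\<^sub>v w)) * t\<^sup>2" for t
  proof -
    have "(v + t \<cdot>\<^sub>v w) \<bullet> (P *\<^sub>v (v + t \<cdot>\<^sub>v w)) =
        v \<bullet> (P *\<^sub>v v) + t * (v \<bullet> (P *\<^sub>v w)) + t * (w \<bullet> (P *\<^sub>v v)) + t\<^sup>2 * (w \<bullet> (P *\<^sub>v w))"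
      using P v w by (simp add: mult_add_distrib_mat_vec[of _ n n] mult_mat_vec[of _ n n]
          add_scalar_prod_distrib[of _ n] scalar_prod_add_distrib[of _ n] power2_eq_square distrib_left)
    also have "\<dots> = 2 * (w \<bullet> w) * t + (w \<bullet> (P *\<^sub>v w)) * t\<^sup>2"
      using sym_mat_scalar_prod_swap[OF P v w] zero by (simp add: w_def algebra_simps)
    moreover have "v + t \<cdot>\<^sub>v w \<in> carrier_vec n" using v w by simp
    ultimately show ?thesis using psd by (auto simp: psd_mat_def)
  qed
  then have "2 * (w \<bullet> w) = 0" by (rule quadratic_nonneg_imp_linear_coeff_zero)
  then show ?thesis using conjugate_square_eq_0_vec[OF w] by (simp add: w_def)
qed

lemma nsd_mat_iff_psd_mat_uminus: "nsd_mat n Q \<longleftrightarrow> psd_mat n (- Q)"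
  by (auto simp: nsd_mat_def psd_mat_def sym_mat_def transpose_uminus)

section \<open>Hermitian forms of real matrices\<close>

lemma of_real_mat_mult_vec_index:
  assumes "M \<in> carrier_mat m n" "x \<in> carrier_vec n" "i < m"
  shows "(map_mat complex_of_real M *\<^sub>v x) $ i =
    of_real ((M *\<^sub>v map_vec Re x) $ i) + \<i> * of_real ((M *\<^sub>v map_vec Im x) $ i)"
  using assms by (simp add: scalar_prod_def complex_eq_iff Re_sum Im_sum)

lemma of_real_mat_mult_vec_eq_0_iff:
  assumes "M \<in> carrier_mat m n" "x \<in> carrier_vec n"
  shows "map_mat complex_of_real M *\<^sub>v x = 0\<^sub>v m \<longleftrightarrow>
    M *\<^sub>v map_vec Re x = 0\<^sub>v m \<and> M *\<^sub>v map_vec Im x = 0\<^sub>v m"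
proof -
  have "(map_mat complex_of_real M *\<^sub>v x) $ i = 0 \<longleftrightarrow>
      (M *\<^sub>v map_vec Re x) $ i = 0 \<and> (M *\<^sub>v map_vec Im x) $ i = 0" if "i < m" for i
    using of_real_mat_mult_vec_index[OF assms that] by (simp add: complex_eq_iff)
  then show ?thesis using assms by (auto simp: vec_eq_iff)
qed

lemma of_real_mat_kernel_mono:
  assumes M: "M \<in> carrier_mat n n" and N: "N \<in> carrier_mat n n"
    and ker: "mat_kernel M \<subseteq> mat_kernel N" and x: "x \<in> carrier_vec n"
    and Mx: "map_mat complex_of_real M *\<^sub>v x = 0\<^sub>v n"
  shows "map_mat complex_of_real N *\<^sub>v x = 0\<^sub>v n"
proof -
  have "map_vec f x \<in> mat_kernel N" if "M *\<^sub>v map_vec f x = 0\<^sub>v n" for f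
    using ker mat_kernelI[OF M _ that] x by auto
  then show ?thesis
    using Mx x M N by (auto simp: of_real_mat_mult_vec_eq_0_iff mat_kernel_def)
qed

lemma of_real_mat_mult_conjugate:
  assumes "M \<in> carrier_mat m n" "x \<in> carrier_vec n"
  shows "map_mat complex_of_real M *\<^sub>v conjugate x = conjugate (map_mat complex_of_real M *\<^sub>v x)"
  using assms by (intro eq_vecI) (auto simp: scalar_prod_def cnj_sum)

lemma of_real_mat_uminus:
  "map_mat complex_of_real (- M) = - map_mat complex_of_real M"
  by (intro eq_matI) auto

definition herm_form :: "complex mat \<Rightarrow> complex vec \<Rightarrow> complex vec \<Rightarrow> complex" where
  "herm_form M x y = conjugate x \<bullet> (M *\<^sub>v y)"

lemma herm_form_add_left:
  "M \<in> carrier_mat n n \<Longrightarrow> x \<in> carrier_vec n \<Longrightarrow> u \<in> carrier_vec n \<Longrightarrow> y \<in> carrier_vec n \<Longrightarrow>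
    herm_form M (x + u) y = herm_form M x y + herm_form M u y"
  by (simp add: herm_form_def conjugate_add_vec[of _ n] add_scalar_prod_distrib[of _ n])

lemma herm_form_add_right:
  "M \<in> carrier_mat n n \<Longrightarrow> x \<in> carrier_vec n \<Longrightarrow> y \<in> carrier_vec n \<Longrightarrow> u \<in> carrier_vec n \<Longrightarrow>
    herm_form M x (y + u) = herm_form M x y + herm_form M x u"
  by (simp add: herm_form_def mult_add_distrib_mat_vec[of _ n n] scalar_prod_add_distrib[of _ n])

lemma herm_form_smult_left:
  "M \<in> carrier_mat n n \<Longrightarrow> x \<in> carrier_vec n \<Longrightarrow> y \<in> carrier_vec n \<Longrightarrow>
    herm_form M (a \<cdot>\<^sub>v x) y = cnj a * herm_form M x y"
  by (simp add: herm_form_def conjugate_smult_vec)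

lemma herm_form_smult_right:
  "M \<in> carrier_mat n n \<Longrightarrow> x \<in> carrier_vec n \<Longrightarrow> y \<in> carrier_vec n \<Longrightarrow>
    herm_form M x (a \<cdot>\<^sub>v y) = a * herm_form M x y"
  by (simp add: herm_form_def mult_mat_vec[of _ n n])

lemma herm_form_eq_0_if_kernel:
  "M \<in> carrier_mat n n \<Longrightarrow> x \<in> carrier_vec n \<Longrightarrow> M *\<^sub>v y = 0\<^sub>v n \<Longrightarrow> herm_form M x y = 0"
  by (simp add: herm_form_def)

lemma sym_mat_herm_form:
  assumes M: "M \<in> carrier_mat n n" "sym_mat M" and x: "x \<in> carrier_vec n"
  shows "herm_form (map_mat complex_of_real M) x x =
    of_real (map_vec Re x \<bullet> (M *\<^sub>v map_vec Re x) + map_vec Im x \<bullet> (M *\<^sub>v map_vec Im x))"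
proof -
  let ?a = "M *\<^sub>v map_vec Re x" and ?b = "M *\<^sub>v map_vec Im x"
  have "herm_form (map_mat complex_of_real M) x x =
      (\<Sum>i = 0..<n. cnj (x $ i) * (of_real (?a $ i) + \<i> * of_real (?b $ i)))"
    using M x unfolding herm_form_def scalar_prod_def
    by (intro sum.cong) (simp_all del: index_mult_mat_vec add: of_real_mat_mult_vec_index[OF M(1) x])
  also have "\<dots> = of_real (map_vec Re x \<bullet> ?a + map_vec Im x \<bullet> ?b)
      + \<i> * of_real (map_vec Re x \<bullet> ?b - map_vec Im x \<bullet> ?a)"
    using M x by (simp add: complex_eq_iff Re_sum Im_sum scalar_prod_def sum.distrib
        sum_subtractf sum_negf algebra_simps)
  also have "map_vec Re x \<bullet> ?b = map_vec Im x \<bullet> ?a"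
    using sym_mat_scalar_prod_swap[OF M] x by simp
  finally show ?thesis by simp
qed

lemma psd_mat_herm_form_nonneg:
  assumes "psd_mat n P" "x \<in> carrier_vec n"
  shows "\<exists>r \<ge> 0. herm_form (map_mat complex_of_real P) x x = of_real r"
  using assms sym_mat_herm_form[of P n x] unfolding psd_mat_def
  by (intro exI[of _ "map_vec Re x \<bullet> (P *\<^sub>v map_vec Re x) + map_vec Im x \<bullet> (P *\<^sub>v map_vec Im x)"])
    (auto intro!: add_nonneg_nonneg)

lemma psd_mat_herm_form_eq_0:
  assumes psd: "psd_mat n P" and x: "x \<in> carrier_vec n"
    and zero: "herm_form (map_mat complex_of_real P) x x = 0"
  shows "map_mat complex_of_real P *\<^sub>v x = 0\<^sub>v n"
proof -
  have P: "P \<in> carrier_mat n n" "sym_mat P" using psd by (auto simp: psd_mat_def)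
  have "map_vec f x \<bullet> (P *\<^sub>v map_vec f x) \<ge> 0" for f
    using psd x by (auto simp: psd_mat_def)
  then have "map_vec Re x \<bullet> (P *\<^sub>v map_vec Re x) = 0" "map_vec Im x \<bullet> (P *\<^sub>v map_vec Im x) = 0"
    using zero sym_mat_herm_form[OF P x] by (smt (verit) of_real_eq_0_iff)+
  then show ?thesis
    using psd_mat_quadratic_form_eq_0[OF psd] x P
    by (simp add: of_real_mat_mult_vec_eq_0_iff[OF P(1) x])
qed

section \<open>Necessity\<close>

lemma smult_vec_eq_0D:
  fixes x :: "'a :: semiring_no_zero_divisors vec"
  assumes x: "x \<in> carrier_vec n" "x \<noteq> 0\<^sub>v n" and ax: "a \<cdot>\<^sub>v x = 0\<^sub>v n"
  shows "a = 0"
proof -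
  obtain i where i: "i < n" "x $ i \<noteq> 0" using x by (auto simp: vec_eq_iff)
  have "a * x $ i = (a \<cdot>\<^sub>v x) $ i" using x(1) i(1) by simp
  also have "\<dots> = 0" using ax i(1) by simp
  finally show ?thesis using i(2) by simp
qed

locale lyapunov_certificate =
  fixes n :: nat and A P :: "real mat"
  assumes A: "A \<in> carrier_mat n n"
    and psd: "psd_mat n P"
    and nsd: "nsd_mat n (transpose_mat A * P + P * A)"
    and kernel: "mat_kernel P \<subseteq> mat_kernel A"
begin

abbreviation "A\<^sub>c \<equiv> map_mat complex_of_real A"
abbreviation "P\<^sub>c \<equiv> map_mat complex_of_real P"
abbreviation "Q\<^sub>c \<equiv> map_mat complex_of_real (transpose_mat A * P + P * A)"

lemma P: "P \<in> carrier_mat n n" "sym_mat P"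
  using psd by (auto simp: psd_mat_def)

lemma herm_form_Q:
  assumes x: "x \<in> carrier_vec n" and y: "y \<in> carrier_vec n"
  shows "herm_form Q\<^sub>c x y = herm_form P\<^sub>c (A\<^sub>c *\<^sub>v x) y + herm_form P\<^sub>c x (A\<^sub>c *\<^sub>v y)"
proof -
  have "Q\<^sub>c = map_mat complex_of_real (transpose_mat A * P) + map_mat complex_of_real (P * A)"
    using A P by (intro eq_matI) auto
  also have "\<dots> = transpose_mat A\<^sub>c * P\<^sub>c + P\<^sub>c * A\<^sub>c"
    using A P by (simp add: of_real_hom.mat_hom_mult[of _ n n] map_mat_transpose)
  finally have "Q\<^sub>c = transpose_mat A\<^sub>c * P\<^sub>c + P\<^sub>c * A\<^sub>c" .
  then show ?thesis
    using A P x y scalar_prod_lyapunov[of A\<^sub>c n P\<^sub>c "conjugate x" y]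
    by (simp add: herm_form_def of_real_mat_mult_conjugate[of _ n n])
qed

lemma herm_form_uminus_Q:
  assumes "x \<in> carrier_vec n"
  shows "herm_form (map_mat complex_of_real (- (transpose_mat A * P + P * A))) x x = - herm_form Q\<^sub>c x x"
  using assms A P by (simp add: herm_form_def of_real_mat_uminus)

lemma herm_form_Q_nonpos:
  assumes "x \<in> carrier_vec n"
  shows "\<exists>r \<le> 0. herm_form Q\<^sub>c x x = of_real r"
proof -
  obtain r where "r \<ge> 0" "- herm_form Q\<^sub>c x x = of_real r"
    using psd_mat_herm_form_nonneg[OF nsd[unfolded nsd_mat_iff_psd_mat_uminus] assms]
    herm_form_uminus_Q[OF assms] by auto
  then show ?thesis by (intro exI[of _ "- r"]) (auto simp: minus_equation_iff)
qed

lemma herm_form_Q_eq_0: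
  assumes "x \<in> carrier_vec n" "herm_form Q\<^sub>c x x = 0"
  shows "Q\<^sub>c *\<^sub>v x = 0\<^sub>v n"
proof -
  have "map_mat complex_of_real (- (transpose_mat A * P + P * A)) *\<^sub>v x = 0\<^sub>v n"
    using psd_mat_herm_form_eq_0[OF nsd[unfolded nsd_mat_iff_psd_mat_uminus]] herm_form_uminus_Q assms
    by simp
  then have "- (Q\<^sub>c *\<^sub>v x) = 0\<^sub>v n" using assms A P by (simp add: of_real_mat_uminus)
  then show ?thesis by (metis uminus_uminus_vec uminus_zero_vec)
qed

lemma P_kernel_subset_A_kernel:
  "x \<in> carrier_vec n \<Longrightarrow> P\<^sub>c *\<^sub>v x = 0\<^sub>v n \<Longrightarrow> A\<^sub>c *\<^sub>v x = 0\<^sub>v n"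
  using of_real_mat_kernel_mono[OF P(1) A kernel] .

lemma eigenvalue_Re_nonpos:
  assumes "eigenvalue A\<^sub>c z"
  shows "Re z \<le> 0"
proof (rule ccontr)
  assume pos: "\<not> Re z \<le> 0"
  from assms A obtain x where x: "x \<in> carrier_vec n" "x \<noteq> 0\<^sub>v n" "A\<^sub>c *\<^sub>v x = z \<cdot>\<^sub>v x"
    by (auto simp: eigenvalue_def eigenvector_def)
  obtain r where r: "r \<ge> 0" "herm_form P\<^sub>c x x = of_real r"
    using psd_mat_herm_form_nonneg[OF psd x(1)] by blast
  obtain q where q: "q \<le> 0" "herm_form Q\<^sub>c x x = of_real q"
    using herm_form_Q_nonpos[OF x(1)] by blast
  have "herm_form Q\<^sub>c x x = (cnj z + z) * herm_form P\<^sub>c x x"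
    using x A P by (simp add: herm_form_Q herm_form_smult_left[of _ n] herm_form_smult_right[of _ n]
        algebra_simps)
  also have "cnj z + z = of_real (2 * Re z)" by (simp add: complex_eq_iff)
  finally have "q = 2 * Re z * r" using r q by (metis of_real_eq_iff of_real_mult)
  then have "herm_form P\<^sub>c x x = 0" using r q pos by (simp add: mult_le_0_iff)
  then have "z \<cdot>\<^sub>v x = 0\<^sub>v n"
    using P_kernel_subset_A_kernel psd_mat_herm_form_eq_0[OF psd] x by simp
  then have "z = 0" using smult_vec_eq_0D[OF x(1,2)] by blast
  then show False using pos by simp
qed

lemma jordan_chain_step:
  assumes "Re z = 0" and u: "u \<in> carrier_vec n" and v: "v \<in> carrier_vec n" and w: "w \<in> carrier_vec n"
    and Av: "A\<^sub>c *\<^sub>v v = z \<cdot>\<^sub>v v + u" and Aw: "A\<^sub>c *\<^sub>v w = z \<cdot>\<^sub>v w + v" and Pu: "P\<^sub>c *\<^sub>v u = 0\<^sub>v n"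
  shows "P\<^sub>c *\<^sub>v v = 0\<^sub>v n"
proof -
  have Pc: "P\<^sub>c \<in> carrier_mat n n" using P by simp
  have z: "cnj z + z = 0" using \<open>Re z = 0\<close> by (simp add: complex_eq_iff)
  have Pu_left: "herm_form P\<^sub>c u y = 0" if "y \<in> carrier_vec n" for y
  proof -
    have "transpose_mat P\<^sub>c = P\<^sub>c" using P by (simp add: map_mat_transpose sym_mat_def)
    then have "herm_form P\<^sub>c u y = (P\<^sub>c *\<^sub>v conjugate u) \<bullet> y"
      using transpose_vec_mult_scalar[OF Pc that, of "conjugate u"] u by (simp add: herm_form_def)
    then show ?thesis using Pu u that P by (simp add: of_real_mat_mult_conjugate[of _ n n])
  qed
  note lin = herm_form_add_left[OF Pc] herm_form_add_right[OF Pc]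
    herm_form_smult_left[OF Pc] herm_form_smult_right[OF Pc] herm_form_eq_0_if_kernel[OF Pc _ Pu]
    Pu_left
  have "herm_form Q\<^sub>c v v = (cnj z + z) * herm_form P\<^sub>c v v"
    using u v w by (simp add: herm_form_Q Av lin algebra_simps)
  then have "Q\<^sub>c *\<^sub>v v = 0\<^sub>v n" using z herm_form_Q_eq_0[OF v] by simp
  then have "0 = herm_form Q\<^sub>c w v" using A P w by (simp add: herm_form_def)
  also have "\<dots> = (cnj z + z) * herm_form P\<^sub>c w v + herm_form P\<^sub>c v v"
    using u v w by (simp add: herm_form_Q Av Aw lin algebra_simps)
  finally have "herm_form P\<^sub>c v v = 0" using z by simp
  then show ?thesis using psd_mat_herm_form_eq_0[OF psd v] by simp
qed

lemma jordan_block_on_imaginary_axis: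
  assumes jnf: "jordan_nf A\<^sub>c n_as" and block: "(k, z) \<in> set n_as" and "Re z = 0"
  shows "k \<le> (if z = 0 then 2 else 1)"
proof (rule ccontr)
  assume long: "\<not> ?thesis"
  have Ac: "A\<^sub>c \<in> carrier_mat n n" using A by simp
  obtain x where x: "\<And>j. x j \<in> carrier_vec n" "x 0 \<noteq> 0\<^sub>v n" "A\<^sub>c *\<^sub>v x 0 = z \<cdot>\<^sub>v x 0"
    "\<And>j. Suc j < k \<Longrightarrow> A\<^sub>c *\<^sub>v x (Suc j) = z \<cdot>\<^sub>v x (Suc j) + x j"
    using jordan_nf_chain[OF Ac jnf block] by blast
  have x0: "A\<^sub>c *\<^sub>v x 0 = z \<cdot>\<^sub>v x 0 + 0\<^sub>v n" using x(1,3) by simp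
  have x1: "A\<^sub>c *\<^sub>v x 1 = z \<cdot>\<^sub>v x 1 + x 0" using x(4)[of 0] long by (simp split: if_splits)
  have "P\<^sub>c *\<^sub>v 0\<^sub>v n = 0\<^sub>v n" using P(1) by (intro eq_vecI) auto
  then have P0: "P\<^sub>c *\<^sub>v x 0 = 0\<^sub>v n"
    using jordan_chain_step[OF \<open>Re z = 0\<close> zero_carrier_vec x(1) x(1) x0 x1] by blast
  show False
  proof (cases "z = 0")
    case True
    have x2: "A\<^sub>c *\<^sub>v x 2 = z \<cdot>\<^sub>v x 2 + x 1"
      using x(4)[of 1] long True by (simp add: numeral_2_eq_2)
    have "P\<^sub>c *\<^sub>v x 1 = 0\<^sub>v n"
      using jordan_chain_step[OF \<open>Re z = 0\<close> x(1) x(1) x(1) x1 x2 P0] .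
    then have "A\<^sub>c *\<^sub>v x 1 = 0\<^sub>v n" using P_kernel_subset_A_kernel x(1) by blast
    moreover have "0 \<cdot>\<^sub>v x 1 = 0\<^sub>v n" using x(1)[of 1] by (intro eq_vecI) auto
    ultimately show False using x(1,2) x1 True by simp
  next
    case False
    then have "z \<cdot>\<^sub>v x 0 = 0\<^sub>v n"
      using P_kernel_subset_A_kernel x(1,3) P0 by simp
    then show False using smult_vec_eq_0D[OF x(1,2)] False by blast
  qed
qed

lemma spectral_conditions:
  "(\<forall>z. eigenvalue A\<^sub>c z \<longrightarrow> Re z \<le> 0) \<and>
   (\<forall>n_as. jordan_nf A\<^sub>c n_as \<longrightarrow>
      (\<forall>(k, z) \<in> set n_as. (z = 0 \<longrightarrow> k \<le> 2) \<and> (z \<noteq> 0 \<and> Re z = 0 \<longrightarrow> k \<le> 1)))"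
proof -
  have "(z = 0 \<longrightarrow> k \<le> 2) \<and> (z \<noteq> 0 \<and> Re z = 0 \<longrightarrow> k \<le> 1)"
    if "jordan_nf A\<^sub>c n_as" "(k, z) \<in> set n_as" for n_as k z
    using jordan_block_on_imaginary_axis[OF that] by (cases "Re z = 0") auto
  then show ?thesis using eigenvalue_Re_nonpos by auto
qed

end

section \<open>Sufficiency\<close>

lemma Re_cnj_mult_le:
  fixes c :: real
  assumes "c > 0"
  shows "Re (cnj u * v) \<le> (c * (cmod u)\<^sup>2 + (cmod v)\<^sup>2 / c) / 2"
proof -
  have "Re (cnj u * v) \<le> cmod u * cmod v"
    using complex_Re_le_cmod[of "cnj u * v"] by (simp add: norm_mult)
  also have "\<dots> \<le> (c * (cmod u)\<^sup>2 + (cmod v)\<^sup>2 / c) / 2"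
  proof -
    have "0 \<le> (c * cmod u - cmod v)\<^sup>2 / c" using assms by simp
    also have "\<dots> = c * (cmod u)\<^sup>2 + (cmod v)\<^sup>2 / c - 2 * (cmod u * cmod v)"
      using assms by (simp add: field_simps power2_eq_square)
    finally show ?thesis by simp
  qed
  finally show ?thesis .
qed

lemma coupling_absorbed:
  fixes c q w :: real
  assumes c: "0 < c" and q: "1 \<le> c\<^sup>2 * q" and w: "0 \<le> w"
  shows "w * (Re (cnj a * b) - c * (cmod a)\<^sup>2) \<le> (c * (q * w) * (cmod b)\<^sup>2 - c * w * (cmod a)\<^sup>2) / 2"
proof -
  have "w * (Re (cnj a * b) - c * (cmod a)\<^sup>2) \<le> w * ((c * (cmod a)\<^sup>2 + (cmod b)\<^sup>2 / c) / 2 - c * (cmod a)\<^sup>2)"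
    using w by (intro mult_left_mono diff_right_mono Re_cnj_mult_le c)
  also have "\<dots> = w * ((cmod b)\<^sup>2 / c - c * (cmod a)\<^sup>2) / 2"
    by (simp add: field_simps)
  also have "\<dots> \<le> w * (c * q * (cmod b)\<^sup>2 - c * (cmod a)\<^sup>2) / 2"
  proof -
    have "(cmod b)\<^sup>2 / c \<le> c\<^sup>2 * q * (cmod b)\<^sup>2 / c"
      using q c by (intro divide_right_mono) (auto intro: mult_le_cancel_right1[THEN iffD2])
    then show ?thesis using c w by (simp add: power2_eq_square mult_left_mono)
  qed
  also have "\<dots> = (c * (q * w) * (cmod b)\<^sup>2 - c * w * (cmod a)\<^sup>2) / 2"
    by (simp add: algebra_simps)
  finally show ?thesis .
qed

locale semistable_bidiagonal =
  fixes n :: nat and lam s :: "nat \<Rightarrow> complex"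
  assumes Re_lam_nonpos: "\<And>k. k < n \<Longrightarrow> Re (lam k) \<le> 0"
    and s_0_or_1: "\<And>k. Suc k < n \<Longrightarrow> s k = 0 \<or> s k = 1"
    and s_1_same_lam: "\<And>k. Suc k < n \<Longrightarrow> s k = 1 \<Longrightarrow> lam (Suc k) = lam k"
    and s_1_off_imaginary_axis: "\<And>k. Suc k < n \<Longrightarrow> s k = 1 \<Longrightarrow> lam k = 0 \<or> Re (lam k) < 0"
    and s_1_zero_short: "\<And>k. Suc (Suc k) < n \<Longrightarrow> s k = 1 \<Longrightarrow> lam k = 0 \<Longrightarrow> s (Suc k) = 0"
begin

definition bidiag :: "(nat \<Rightarrow> complex) \<Rightarrow> nat \<Rightarrow> complex" where
  "bidiag y k = lam k * y k + (if Suc k < n then s k * y (Suc k) else 0)"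

definition scale :: real where
  "scale = 1 + (\<Sum>k<n. 1 / (Re (lam k))\<^sup>2)"

text \<open>Along a block with \<open>Re \<lambda> < 0\<close> the weights grow by the factor \<open>scale \<ge> 1 / (Re \<lambda>)\<^sup>2\<close>,
  so that the coupling term \<open>s k * y (k + 1)\<close> is absorbed by the dissipation of coordinate
  \<open>k + 1\<close>. The head of a nilpotent block of size 2 gets weight 0, which is harmless because
  \<open>bidiag\<close> does not see that coordinate.\<close>

definition weight :: "nat \<Rightarrow> real" where
  "weight k = (if lam k = 0 \<and> Suc k < n \<and> s k = 1 then 0 else scale ^ k)"

definition dissipation :: "(nat \<Rightarrow> complex) \<Rightarrow> nat \<Rightarrow> real" where
  "dissipation y k = (if k < n then - Re (lam k) * weight k * (cmod (y k))\<^sup>2 else 0)"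

lemma scale_ge_1: "1 \<le> scale"
  unfolding scale_def by (auto intro!: sum_nonneg)

lemma scale_bound:
  assumes "k < n" "Re (lam k) \<noteq> 0"
  shows "1 \<le> (Re (lam k))\<^sup>2 * scale"
proof -
  have "1 / (Re (lam k))\<^sup>2 \<le> scale"
    using member_le_sum[of k "{..<n}" "\<lambda>k. 1 / (Re (lam k))\<^sup>2"] assms(1)
    by (simp add: scale_def)
  then show ?thesis using assms(2) by (simp add: field_simps)
qed

lemma weight_nonneg: "0 \<le> weight k"
  using scale_ge_1 by (simp add: weight_def)

lemma dissipation_nonneg: "0 \<le> dissipation y k"
  using Re_lam_nonpos[of k] weight_nonneg[of k]
  by (simp add: dissipation_def mult_nonpos_nonneg)

lemma weighted_term_le:
  assumes k: "k < n"
  shows "weight k * Re (cnj (y k) * bidiag y k) \<le> (dissipation y (Suc k) - dissipation y k) / 2"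
proof -
  have split: "weight k * Re (cnj (y k) * bidiag y k) = - dissipation y k
      + weight k * (if Suc k < n then Re (s k * (cnj (y k) * y (Suc k))) else 0)"
    using k unfolding bidiag_def dissipation_def cmod_power2 by (simp add: power2_eq_square algebra_simps)
  show ?thesis
  proof (cases "Suc k < n \<and> s k = 1")
    case False
    then have "weight k * Re (cnj (y k) * bidiag y k) = - dissipation y k"
      using split s_0_or_1[of k] by auto
    then show ?thesis using dissipation_nonneg[of y "Suc k"] dissipation_nonneg[of y k] by simp
  next
    case True
    show ?thesis
    proof (cases "lam k = 0")
      case True
      then have "weight k = 0" using \<open>Suc k < n \<and> s k = 1\<close> by (simp add: weight_def)
      then show ?thesis
        using dissipation_nonneg[of y "Suc k"] \<open>Suc k < n \<and> s k = 1\<close> by (simp add: dissipation_def)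
    next
      case False
      define c where "c = - Re (lam k)"
      have c: "0 < c" using s_1_off_imaginary_axis False True by (force simp: c_def)
      have weights: "weight k = scale ^ k" "weight (Suc k) = scale * scale ^ k"
        using False s_1_same_lam True by (auto simp: weight_def)
      have "weight k * Re (cnj (y k) * bidiag y k)
          = scale ^ k * (Re (cnj (y k) * y (Suc k)) - c * (cmod (y k))\<^sup>2)"
        using split True weights by (simp add: dissipation_def c_def k algebra_simps)
      also have "\<dots> \<le> (c * (scale * scale ^ k) * (cmod (y (Suc k)))\<^sup>2 - c * scale ^ k * (cmod (y k))\<^sup>2) / 2"
        using scale_bound[OF k] c scale_ge_1 by (intro coupling_absorbed) (auto simp: c_def)
      also have "\<dots> = (dissipation y (Suc k) - dissipation y k) / 2"
        using True k weights s_1_same_lam by (simp add: dissipation_def c_def)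
      finally show ?thesis .
    qed
  qed
qed

lemma weighted_form_nonpos: "(\<Sum>k<n. weight k * Re (cnj (y k) * bidiag y k)) \<le> 0"
proof -
  have "(\<Sum>k<n. weight k * Re (cnj (y k) * bidiag y k))
      \<le> (\<Sum>k<n. (dissipation y (Suc k) - dissipation y k) / 2)"
    by (intro sum_mono weighted_term_le) simp
  also have "\<dots> = (dissipation y n - dissipation y 0) / 2"
    by (simp only: sum_divide_distrib[symmetric] sum_lessThan_telescope)
  also have "\<dots> = - dissipation y 0 / 2" by (simp add: dissipation_def)
  also have "\<dots> \<le> 0" using dissipation_nonneg[of y 0] by simp
  finally show ?thesis .
qed

lemma weight_eq_0_iff: "weight k = 0 \<longleftrightarrow> lam k = 0 \<and> Suc k < n \<and> s k = 1"
  using scale_ge_1 by (simp add: weight_def)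

lemma bidiag_eq_0_if_weighted_norm_eq_0:
  assumes zero: "(\<Sum>k<n. weight k * (cmod (y k))\<^sup>2) = 0" and k: "k < n"
  shows "bidiag y k = 0"
proof -
  have y0: "y j = 0" if "j < n" "weight j \<noteq> 0" for j
    using zero that by (subst (asm) sum_nonneg_eq_0_iff) (auto intro: mult_nonneg_nonneg weight_nonneg)
  show ?thesis
  proof (cases "Suc k < n \<and> s k = 1")
    case False
    then show ?thesis using k y0[of k] s_0_or_1[of k] by (auto simp: bidiag_def weight_eq_0_iff)
  next
    case True
    then have "weight (Suc k) \<noteq> 0"
      using s_1_same_lam[of k] s_1_zero_short[of k] by (auto simp: weight_eq_0_iff)
    then show ?thesis
      using True y0[of k] y0[of "Suc k"] by (auto simp: bidiag_def weight_eq_0_iff)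
  qed
qed

end

definition weighted_gram_re :: "nat \<Rightarrow> (nat \<Rightarrow> real) \<Rightarrow> complex mat \<Rightarrow> real mat" where
  "weighted_gram_re n d R = mat n n (\<lambda>(i, j). \<Sum>k<n. d k * Re (cnj (R $$ (k, i)) * R $$ (k, j)))"

lemma sym_mat_weighted_gram_re: "sym_mat (weighted_gram_re n d R)"
  unfolding sym_mat_def weighted_gram_re_def
  by (intro eq_matI) (auto intro!: sum.cong simp: algebra_simps)

lemma weighted_gram_re_form:
  assumes R: "R \<in> carrier_mat n n" and v: "v \<in> carrier_vec n" and w: "w \<in> carrier_vec n"
  shows "v \<bullet> (weighted_gram_re n d R *\<^sub>v w) = (\<Sum>k<n. d k *
    Re (cnj ((R *\<^sub>v map_vec complex_of_real v) $ k) * (R *\<^sub>v map_vec complex_of_real w) $ k))"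
proof -
  let ?c = "\<lambda>k i j. d k * (v $ i * w $ j * Re (cnj (R $$ (k, i)) * R $$ (k, j)))"
  have "v \<bullet> (weighted_gram_re n d R *\<^sub>v w) =
      (\<Sum>i<n. v $ i * (\<Sum>j<n. (\<Sum>k<n. d k * Re (cnj (R $$ (k, i)) * R $$ (k, j))) * w $ j))"
    using v w by (simp add: weighted_gram_re_def scalar_prod_def atLeast0LessThan)
  also have "\<dots> = (\<Sum>i<n. \<Sum>j<n. \<Sum>k<n. ?c k i j)"
    by (simp add: sum_distrib_left sum_distrib_right mult_ac)
  also have "\<dots> = (\<Sum>i<n. \<Sum>k<n. \<Sum>j<n. ?c k i j)"
    by (intro sum.cong refl sum.swap)
  also have "\<dots> = (\<Sum>k<n. \<Sum>i<n. \<Sum>j<n. ?c k i j)"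
    by (rule sum.swap)
  also have "\<dots> = (\<Sum>k<n. d k * (\<Sum>i<n. \<Sum>j<n.
      Re (cnj (R $$ (k, i) * of_real (v $ i)) * (R $$ (k, j) * of_real (w $ j)))))"
  proof -
    have "Re (cnj (a * of_real x) * (b * of_real y)) = x * y * Re (cnj a * b)" for a b :: complex and x y
      by (simp add: algebra_simps)
    then show ?thesis by (simp add: sum_distrib_left mult.assoc)
  qed
  also have "\<dots> = (\<Sum>k<n. d k *
      Re (cnj ((R *\<^sub>v map_vec complex_of_real v) $ k) * (R *\<^sub>v map_vec complex_of_real w) $ k))"
    using R v w
    by (intro sum.cong refl) (simp add: scalar_prod_def atLeast0LessThan cnj_sum sum_product Re_sum)
  finally show ?thesis .
qed

locale bidiagonal_similarity = semistable_bidiagonal +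
  fixes A :: "real mat" and B R S :: "complex mat"
  assumes A: "A \<in> carrier_mat n n" and B: "B \<in> carrier_mat n n"
    and R: "R \<in> carrier_mat n n" and S: "S \<in> carrier_mat n n" and SR: "S * R = 1\<^sub>m n"
    and RA: "R * map_mat complex_of_real A = B * R"
    and B_bidiag: "\<And>y k. y \<in> carrier_vec n \<Longrightarrow> k < n \<Longrightarrow> (B *\<^sub>v y) $ k = bidiag (($) y) k"
begin

definition coords :: "real vec \<Rightarrow> complex vec" where
  "coords v = R *\<^sub>v map_vec complex_of_real v"

definition certificate :: "real mat" where
  "certificate = weighted_gram_re n weight R"

lemma certificate_carrier: "certificate \<in> carrier_mat n n"
  by (simp add: certificate_def weighted_gram_re_def)

lemma sym_mat_certificate: "sym_mat certificate"
  by (simp add: certificate_def sym_mat_weighted_gram_re)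

lemma coords_carrier: "coords v \<in> carrier_vec n"
  using R by (intro carrier_vecI) (simp add: coords_def)

lemma certificate_form:
  "v \<in> carrier_vec n \<Longrightarrow> w \<in> carrier_vec n \<Longrightarrow>
    v \<bullet> (certificate *\<^sub>v w) = (\<Sum>k<n. weight k * Re (cnj (coords v $ k) * coords w $ k))"
  using weighted_gram_re_form[OF R] by (simp add: certificate_def coords_def)

lemma certificate_norm:
  "v \<in> carrier_vec n \<Longrightarrow> v \<bullet> (certificate *\<^sub>v v) = (\<Sum>k<n. weight k * (cmod (coords v $ k))\<^sup>2)"
  unfolding certificate_form cmod_power2 by (simp add: power2_eq_square)

lemma coords_mult: 
  assumes "v \<in> carrier_vec n"
  shows "coords (A *\<^sub>v v) = B *\<^sub>v coords v"
proof -
  have "coords (A *\<^sub>v v) = (R * map_mat complex_of_real A) *\<^sub>v map_vec complex_of_real v"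
    using assms A R by (simp add: coords_def of_real_hom.mult_mat_vec_hom[of _ n n])
  also have "\<dots> = B *\<^sub>v coords v" using assms B R by (simp add: RA coords_def)
  finally show ?thesis .
qed

lemma psd_mat_certificate: "psd_mat n certificate"
  using certificate_carrier sym_mat_certificate
  by (auto simp: psd_mat_def certificate_norm intro!: sum_nonneg mult_nonneg_nonneg weight_nonneg)

lemma nsd_mat_lyapunov_certificate: "nsd_mat n (transpose_mat A * certificate + certificate * A)"
proof -
  note P = certificate_carrier sym_mat_certificate
  have "v \<bullet> ((transpose_mat A * certificate + certificate * A) *\<^sub>v v) \<le> 0" if v: "v \<in> carrier_vec n" for v
  proof -
    have "v \<bullet> ((transpose_mat A * certificate + certificate * A) *\<^sub>v v) =
        2 * (v \<bullet> (certificate *\<^sub>v (A *\<^sub>v v)))"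
      using scalar_prod_lyapunov[OF A P(1) v v] sym_mat_scalar_prod_swap[OF P, of "A *\<^sub>v v" v] v A
      by simp
    also have "\<dots> = 2 * (\<Sum>k<n. weight k * Re (cnj (coords v $ k) * bidiag (($) (coords v)) k))"
      using certificate_form[OF v mult_mat_vec_carrier[OF A v]] coords_mult[OF v]
        B_bidiag[OF coords_carrier] by simp
    also have "\<dots> \<le> 0" using weighted_form_nonpos by simp
    finally show ?thesis .
  qed
  then show ?thesis using A P by (simp add: nsd_mat_def sym_mat_lyapunov)
qed

lemma mat_kernel_certificate: "mat_kernel certificate \<subseteq> mat_kernel A"
proof
  fix v assume "v \<in> mat_kernel certificate"
  then have v: "v \<in> carrier_vec n" "certificate *\<^sub>v v = 0\<^sub>v n"
    using mat_kernelD[OF certificate_carrier] by auto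
  then have "(\<Sum>k<n. weight k * (cmod (coords v $ k))\<^sup>2) = 0" using certificate_norm[OF v(1)] by simp
  then have "(B *\<^sub>v coords v) $ k = 0" if "k < n" for k
    using B_bidiag[OF coords_carrier that] bidiag_eq_0_if_weighted_norm_eq_0[OF _ that] by simp
  then have "B *\<^sub>v coords v = 0\<^sub>v n" using B by (intro eq_vecI) auto
  then have "R *\<^sub>v map_vec complex_of_real (A *\<^sub>v v) = 0\<^sub>v n"
    using coords_mult[OF v(1)] by (simp add: coords_def)
  then have "(S * R) *\<^sub>v map_vec complex_of_real (A *\<^sub>v v) = 0\<^sub>v n"
    using S R A v by (subst assoc_mult_mat_vec[of _ n n _ n]) auto
  then have "A *\<^sub>v v = 0\<^sub>v n" using A v by (simp add: SR)
  then show "v \<in> mat_kernel A" using A v by (auto intro: mat_kernelI)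
qed

end

lemma semistable_bidiagonal_jordan_matrix:
  assumes blocks: "\<And>k z. (k, z) \<in> set n_as \<Longrightarrow>
    Re z \<le> 0 \<and> (z = 0 \<longrightarrow> k \<le> 2) \<and> (z \<noteq> 0 \<and> Re z = 0 \<longrightarrow> k \<le> 1)"
  shows "semistable_bidiagonal (sum_list (map fst n_as))
    (\<lambda>k. jordan_matrix n_as $$ (k, k)) (\<lambda>k. jordan_matrix n_as $$ (k, Suc k))"
proof
  let ?N = "sum_list (map fst n_as)" and ?J = "jordan_matrix n_as"
  fix k
  show "Re (?J $$ (k, k)) \<le> 0" if "k < ?N"
    using jordan_matrix_superdiagonal_run[of k 0 n_as] that blocks by auto
  show "?J $$ (k, Suc k) = 0 \<or> ?J $$ (k, Suc k) = 1" if "Suc k < ?N"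
    using jordan_matrix_superdiagonal_0_or_1[OF that] by auto
  show "?J $$ (Suc k, Suc k) = ?J $$ (k, k)" if "Suc k < ?N" "?J $$ (k, Suc k) = 1"
    using jordan_matrix_superdiagonal_same_eigenvalue[OF that(1)] that(2) by simp
  show "?J $$ (k, k) = 0 \<or> Re (?J $$ (k, k)) < 0" if "Suc k < ?N" "?J $$ (k, Suc k) = 1"
  proof -
    have "\<exists>k' > 1. (k', ?J $$ (k, k)) \<in> set n_as"
      by (rule jordan_matrix_superdiagonal_run) (use that in auto)
    then obtain k' where "k' > 1" "(k', ?J $$ (k, k)) \<in> set n_as" by blast
    then show ?thesis using blocks by fastforce
  qed
  show "?J $$ (Suc k, Suc (Suc k)) = 0"
    if "Suc (Suc k) < ?N" "?J $$ (k, Suc k) = 1" "?J $$ (k, k) = 0"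
  proof (rule ccontr)
    assume "?J $$ (Suc k, Suc (Suc k)) \<noteq> 0"
    then have "\<exists>k' > 2. (k', ?J $$ (k, k)) \<in> set n_as"
      by (intro jordan_matrix_superdiagonal_run) (use that in \<open>auto simp: less_2_cases_iff\<close>)
    then obtain k' where "k' > 2" "(k', ?J $$ (k, k)) \<in> set n_as" by blast
    then show False using blocks that(3) by fastforce
  qed
qed

lemma lyapunov_certificate_exists:
  fixes A :: "real mat"
  assumes A: "A \<in> carrier_mat n n"
    and spectrum_eigenvalues: "\<forall>z. eigenvalue (map_mat complex_of_real A) z \<longrightarrow> Re z \<le> 0"
    and spectrum_blocks: "\<forall>n_as. jordan_nf (map_mat complex_of_real A) n_as \<longrightarrow>
      (\<forall>(k, z) \<in> set n_as. (z = 0 \<longrightarrow> k \<le> 2) \<and> (z \<noteq> 0 \<and> Re z = 0 \<longrightarrow> k \<le> 1))"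
  shows "\<exists>P \<in> carrier_mat n n. sym_mat P \<and> psd_mat n P \<and>
    nsd_mat n (transpose_mat A * P + P * A) \<and> mat_kernel P \<subseteq> mat_kernel A"
proof -
  let ?Ac = "map_mat complex_of_real A"
  have Ac: "?Ac \<in> carrier_mat n n" using A by simp
  obtain n_as where jnf: "jordan_nf ?Ac n_as"
    using char_poly_factorized[OF Ac] jordan_nf_exists[OF Ac] by blast
  let ?J = "jordan_matrix n_as"
  from jnf obtain S R where wit: "similar_mat_wit ?Ac ?J S R"
    unfolding jordan_nf_def similar_mat_def by blast
  from similar_mat_witD2[OF Ac wit] have J: "?J \<in> carrier_mat n n"
    and S: "S \<in> carrier_mat n n" and R: "R \<in> carrier_mat n n" and SR: "S * R = 1\<^sub>m n" by auto
  have N: "sum_list (map fst n_as) = n" using J by auto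
  have blocks: "Re z \<le> 0 \<and> (z = 0 \<longrightarrow> k \<le> 2) \<and> (z \<noteq> 0 \<and> Re z = 0 \<longrightarrow> k \<le> 1)"
    if "(k, z) \<in> set n_as" for k z
    using spectrum_eigenvalues spectrum_blocks jnf that jordan_nf_block_eigenvalue[OF Ac jnf that] by auto
  interpret semistable_bidiagonal n "\<lambda>k. ?J $$ (k, k)" "\<lambda>k. ?J $$ (k, Suc k)"
    using semistable_bidiagonal_jordan_matrix[of n_as, OF blocks] unfolding N .
  interpret bidiagonal_similarity n "\<lambda>k. ?J $$ (k, k)" "\<lambda>k. ?J $$ (k, Suc k)" A ?J R S
  proof
    show "R * ?Ac = ?J * R" using similar_mat_wit_intertwines[OF similar_mat_wit_sym[OF wit]] by simp
    show "(?J *\<^sub>v y) $ k = bidiag (($) y) k" if "y \<in> carrier_vec n" "k < n" for y k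
      using jordan_matrix_mult_vec_index[of y n_as k] that by (simp add: N bidiag_def)
  qed (use A J R S SR in auto)
  show ?thesis
    using certificate_carrier sym_mat_certificate psd_mat_certificate nsd_mat_lyapunov_certificate
      mat_kernel_certificate by blast
qed

theorem proposition1:
  fixes A0 :: "real mat" and n :: nat
  assumes "A0 \<in> carrier_mat n n"
  shows "(\<exists>P0 \<in> carrier_mat n n. sym_mat P0 \<and> psd_mat n P0 \<and>
            nsd_mat n (transpose_mat A0 * P0 + P0 * A0) \<and>
            mat_kernel P0 \<subseteq> mat_kernel A0)
    \<longleftrightarrow>
         ((\<forall>z. eigenvalue (map_mat complex_of_real A0) z \<longrightarrow> Re z \<le> 0) \<and>
          (\<forall>n_as. jordan_nf (map_mat complex_of_real A0) n_as \<longrightarrow>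
             (\<forall>(k, z) \<in> set n_as.
                (z = 0 \<longrightarrow> k \<le> 2) \<and>
                (z \<noteq> 0 \<and> Re z = 0 \<longrightarrow> k \<le> 1))))"
  (is "?certificate \<longleftrightarrow> ?spectrum")
proof
  assume ?certificate
  then obtain P0 where "psd_mat n P0" "nsd_mat n (transpose_mat A0 * P0 + P0 * A0)"
    "mat_kernel P0 \<subseteq> mat_kernel A0" by blast
  with assms interpret lyapunov_certificate n A0 P0 by unfold_locales
  show ?spectrum by (rule spectral_conditions)
next
  assume ?spectrum
  then show ?certificate using lyapunov_certificate_exists[OF assms] by blast
qed

end
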